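(* Let $D$ be a pv-monoid (idempotent, with symmetric valuation function), $P$ a nonempty finite set of ports, and $\zeta,\zeta_1,\zeta_2,\zeta_3\in PCL(D,P)$. Then: (i) $\zeta\uplus 0\equiv 0\equiv 0\uplus\zeta$. (ii) If $\otimes$ is commutative, then $\zeta_1\uplus\zeta_2\equiv\zeta_2\uplus\zeta_1$. (iii) If $D$ is associative and $\oplus$-distributive, then $(\zeta_1\uplus\zeta_2)\uplus\zeta_3\equiv\zeta_1\uplus(\zeta_2\uplus\zeta_3)$. (iv) If $D$ is left-$\oplus$-distributive, then $\zeta\otimes(\zeta_1\oplus\zeta_2)\equiv(\zeta\otimes\zeta_1)\oplus(\zeta\otimes\zeta_2)$. (v) If $D$ is right-$\oplus$-distributive, then $(\zeta_1\oplus\zeta_2)\otimes\zeta\equiv(\zeta_1\otimes\zeta)\oplus(\zeta_2\otimes\zeta)$.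
   Context: A valuation monoid $(D,\oplus,\mathrm{val},0)$ consists of a commutative monoid $(D,\oplus,0)$ and a map $\mathrm{val}:D^+\to D$ ($D^+$ = nonempty finite sequences over $D$) with $\mathrm{val}(d)=d$ and $\mathrm{val}(d_1,\dots,d_n)=0$ whenever some $d_i=0$. A pv-monoid $(D,\oplus,\mathrm{val},\otimes,0,1)$ is a valuation monoid with a binary operation $\otimes$ and an element $1$ such that $\mathrm{val}(1,\dots,1)=1$ for any $n\ge1$ arguments, $0\otimes d=d\otimes0=0$, $1\otimes d=d\otimes1=d$. Standing assumption: $D$ is idempotent ($d\oplus d=d$) and $\mathrm{val}$ is symmetric. $D$ is left-$\oplus$-distributive if $d\otimes(d_1\oplus d_2)=(d\otimes d_1)\oplus(d\otimes d_2)$, right-$\oplus$-distributive if $(d_1\oplus d_2)\otimes d=(d_1\otimes d)\oplus(d_2\otimes d)$, $\oplus$-distributive if both; associative if $\otimes$ is associative. $I(P)$ is the set of nonempty subsets of $P$, $C(P)$ the set of nonempty subsets of $I(P)$. PIL formulas: $\phi::=true\mid p\mid\overline{\phi}\mid\phi\vee\phi$ ($p\in P$), $\alpha\models_i p$ iff $p\in\alpha$, other connectives as usual. PCL formulas: $f::=true\mid\phi\mid\neg f\mid f\sqcup f\mid f+f$; $\gamma\models\phi$ iff every $\alpha\in\gamma$ satisfies $\phi$; $\neg,\sqcup$ are complement and union; $\gamma\models f_1+f_2$ iff $\gamma=\gamma_1\cup\gamma_2$ with $\gamma_1,\gamma_2\in C(P)$, $\gamma_1\models f_1,\gamma_2\models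 f_2$. w$_{\text{pvm}}$PCL formulas ($PCL(D,P)$): $\zeta::=d\mid f\mid\zeta\oplus\zeta\mid\zeta\otimes\zeta\mid\zeta\uplus\zeta\mid *\zeta$; semantics $\|\zeta\|:C(P)\to D$: $\|d\|(\gamma)=d$; $\|f\|(\gamma)\in\{0,1\}$ is $1$ iff $\gamma\models f$; $\oplus,\otimes$ pointwise; $\|\zeta_1\uplus\zeta_2\|(\gamma)=\bigoplus(\|\zeta_1\|(\gamma_1)\otimes\|\zeta_2\|(\gamma_2))$ over disjoint $\gamma_1,\gamma_2\in C(P)$ with union $\gamma$; $\|*\zeta\|(\gamma)=\bigoplus_{n>0}\bigoplus\mathrm{val}(\|\zeta\|(\gamma_1),\dots,\|\zeta\|(\gamma_n))$ over pairwise disjoint $\gamma_1,\dots,\gamma_n\in C(P)$ with union $\gamma$. $\zeta\equiv\zeta'$ iff $\|\zeta\|=\|\zeta'\|$. An empty $\oplus$-sum is $0$. *)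

theory Defs
  imports Main "HOL-Library.Multiset"
begin

text \<open>A pv-monoid whose carrier is the whole type 'd.  The valuation function
  is given on lists; only its values on nonempty lists are relevant.\<close>

record 'd pvm =
  pplus  :: "'d \<Rightarrow> 'd \<Rightarrow> 'd"
  pval   :: "'d list \<Rightarrow> 'd"
  ptimes :: "'d \<Rightarrow> 'd \<Rightarrow> 'd"
  pzero  :: 'd
  pone   :: 'd

definition valuation_monoid :: "'d pvm \<Rightarrow> bool" where
  "valuation_monoid D \<longleftrightarrow>
     (\<forall>a b c. pplus D (pplus D a b) c = pplus D a (pplus D b c)) \<and>
     (\<forall>a b. pplus D a b = pplus D b a) \<and>
     (\<forall>a. pplus D (pzero D) a = a) \<and>
     (\<forall>d. pval D [d] = d) \<and>
     (\<forall>ds. ds \<noteq> [] \<and> pzero D \<in> set ds \<longrightarrow> pval D ds = pzero D)"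

definition pv_monoid :: "'d pvm \<Rightarrow> bool" where
  "pv_monoid D \<longleftrightarrow> valuation_monoid D \<and>
     (\<forall>n\<ge>1. pval D (replicate n (pone D)) = pone D) \<and>
     (\<forall>d. ptimes D (pzero D) d = pzero D \<and> ptimes D d (pzero D) = pzero D) \<and>
     (\<forall>d. ptimes D (pone D) d = d \<and> ptimes D d (pone D) = d)"

definition idempotent_pvm :: "'d pvm \<Rightarrow> bool" where
  "idempotent_pvm D \<longleftrightarrow> (\<forall>d. pplus D d d = d)"

definition symmetric_val :: "'d pvm \<Rightarrow> bool" where
  "symmetric_val D \<longleftrightarrow> (\<forall>xs ys. xs \<noteq> [] \<and> mset xs = mset ys \<longrightarrow> pval D xs = pval D ys)"

definition left_distrib :: "'d pvm \<Rightarrow> bool" where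
  "left_distrib D \<longleftrightarrow> (\<forall>d d1 d2. ptimes D d (pplus D d1 d2) = pplus D (ptimes D d d1) (ptimes D d d2))"

definition right_distrib :: "'d pvm \<Rightarrow> bool" where
  "right_distrib D \<longleftrightarrow> (\<forall>d d1 d2. ptimes D (pplus D d1 d2) d = pplus D (ptimes D d1 d) (ptimes D d2 d))"

definition plus_distrib :: "'d pvm \<Rightarrow> bool" where
  "plus_distrib D \<longleftrightarrow> left_distrib D \<and> right_distrib D"

definition assoc_pvm :: "'d pvm \<Rightarrow> bool" where
  "assoc_pvm D \<longleftrightarrow> (\<forall>a b c. ptimes D (ptimes D a b) c = ptimes D a (ptimes D b c))"

definition comm_times :: "'d pvm \<Rightarrow> bool" where
  "comm_times D \<longleftrightarrow> (\<forall>a b. ptimes D a b = ptimes D b a)"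

definition bigplus :: "'d pvm \<Rightarrow> ('a \<Rightarrow> 'd) \<Rightarrow> 'a set \<Rightarrow> 'd" where
  "bigplus D f A = Finite_Set.fold (\<lambda>x acc. pplus D (f x) acc) (pzero D) A"

definition IP :: "'p set \<Rightarrow> 'p set set" where
  "IP P = {a. a \<subseteq> P \<and> a \<noteq> {}}"

definition CP :: "'p set \<Rightarrow> 'p set set set" where
  "CP P = {g. g \<subseteq> IP P \<and> g \<noteq> {}}"

datatype 'p pil = PIL_True | PIL_Port 'p | PIL_Neg "'p pil" | PIL_Or "'p pil" "'p pil"

primrec pil_sat :: "'p set \<Rightarrow> 'p pil \<Rightarrow> bool" where
  "pil_sat \<alpha> PIL_True = True"
| "pil_sat \<alpha> (PIL_Port p) = (p \<in> \<alpha>)"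
| "pil_sat \<alpha> (PIL_Neg \<phi>) = (\<not> pil_sat \<alpha> \<phi>)"
| "pil_sat \<alpha> (PIL_Or \<phi> \<psi>) = (pil_sat \<alpha> \<phi> \<or> pil_sat \<alpha> \<psi>)"

datatype 'p pcl = PCL_True | PCL_PIL "'p pil" | PCL_Neg "'p pcl"
  | PCL_Union "'p pcl" "'p pcl" | PCL_Plus "'p pcl" "'p pcl"

primrec pcl_sat :: "'p set \<Rightarrow> 'p set set \<Rightarrow> 'p pcl \<Rightarrow> bool" where
  "pcl_sat P \<gamma> PCL_True = True"
| "pcl_sat P \<gamma> (PCL_PIL \<phi>) = (\<forall>\<alpha>\<in>\<gamma>. pil_sat \<alpha> \<phi>)"
| "pcl_sat P \<gamma> (PCL_Neg f) = (\<not> pcl_sat P \<gamma> f)"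
| "pcl_sat P \<gamma> (PCL_Union f g) = (pcl_sat P \<gamma> f \<or> pcl_sat P \<gamma> g)"
| "pcl_sat P \<gamma> (PCL_Plus f g) =
     (\<exists>\<gamma>1\<in>CP P. \<exists>\<gamma>2\<in>CP P. \<gamma> = \<gamma>1 \<union> \<gamma>2 \<and> pcl_sat P \<gamma>1 f \<and> pcl_sat P \<gamma>2 g)"

datatype ('d, 'p) wpcl =
    W_Const 'd
  | W_PCL "'p pcl"
  | W_Plus "('d, 'p) wpcl" "('d, 'p) wpcl"
  | W_Times "('d, 'p) wpcl" "('d, 'p) wpcl"
  | W_Coal "('d, 'p) wpcl" "('d, 'p) wpcl"
  | W_Star "('d, 'p) wpcl"

definition splits2 :: "'p set \<Rightarrow> 'p set set \<Rightarrow> ('p set set \<times> 'p set set) set" where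
  "splits2 P \<gamma> = {(\<gamma>1, \<gamma>2). \<gamma>1 \<in> CP P \<and> \<gamma>2 \<in> CP P \<and> \<gamma>1 \<inter> \<gamma>2 = {} \<and> \<gamma>1 \<union> \<gamma>2 = \<gamma>}"

definition splitsN :: "'p set \<Rightarrow> 'p set set \<Rightarrow> nat \<Rightarrow> 'p set set list set" where
  "splitsN P \<gamma> n = {gs. length gs = n \<and> set gs \<subseteq> CP P \<and>
      (\<forall>i<n. \<forall>j<n. i \<noteq> j \<longrightarrow> gs ! i \<inter> gs ! j = {}) \<and> \<Union>(set gs) = \<gamma>}"

primrec wsem :: "'d pvm \<Rightarrow> 'p set \<Rightarrow> ('d, 'p) wpcl \<Rightarrow> 'p set set \<Rightarrow> 'd" where
  "wsem D P (W_Const d) \<gamma> = d"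
| "wsem D P (W_PCL f) \<gamma> = (if pcl_sat P \<gamma> f then pone D else pzero D)"
| "wsem D P (W_Plus z1 z2) \<gamma> = pplus D (wsem D P z1 \<gamma>) (wsem D P z2 \<gamma>)"
| "wsem D P (W_Times z1 z2) \<gamma> = ptimes D (wsem D P z1 \<gamma>) (wsem D P z2 \<gamma>)"
| "wsem D P (W_Coal z1 z2) \<gamma> =
     bigplus D (\<lambda>(\<gamma>1, \<gamma>2). ptimes D (wsem D P z1 \<gamma>1) (wsem D P z2 \<gamma>2)) (splits2 P \<gamma>)"
| "wsem D P (W_Star z) \<gamma> =
     bigplus D (\<lambda>n. bigplus D (\<lambda>gs. pval D (map (wsem D P z) gs)) (splitsN P \<gamma> n))
       {1..card \<gamma>}"

definition wequiv :: "'d pvm \<Rightarrow> 'p set \<Rightarrow> ('d, 'p) wpcl \<Rightarrow> ('d, 'p) wpcl \<Rightarrow> bool" where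
  "wequiv D P z z' \<longleftrightarrow> (\<forall>\<gamma>\<in>CP P. wsem D P z \<gamma> = wsem D P z' \<gamma>)"

end

theory Submission
  imports Defs
begin

text \<open>The laws for \<oplus> and \<otimes> hold pointwise.  For the coalescing operator \<uplus>, the sums
  defining it are finite sums in the commutative monoid (D, \<oplus>, 0): a zero factor annihilates
  every summand; commutativity of \<uplus> follows from that of \<otimes> by the reindexing
  (\<gamma>1, \<gamma>2) \<mapsto> (\<gamma>2, \<gamma>1); and under distributivity both bracketings of a triple
  coalescence expand to a single sum over the decompositions of \<gamma> into three pairwise
  disjoint configurations, where associativity of \<otimes> identifies the summands.\<close>

lemma comm_monoid_pplus:
  assumes "valuation_monoid D"
  shows "comm_monoid (pplus D) (pzero D)"
  using assms unfolding valuation_monoid_def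
  by unfold_locales metis+

definition splits3 :: "'p set \<Rightarrow> 'p set set \<Rightarrow> ('p set set \<times> 'p set set \<times> 'p set set) set" where
  "splits3 P \<gamma> = {(\<gamma>1, \<gamma>2, \<gamma>3). \<gamma>1 \<in> CP P \<and> \<gamma>2 \<in> CP P \<and> \<gamma>3 \<in> CP P \<and>
      \<gamma>1 \<inter> \<gamma>2 = {} \<and> \<gamma>1 \<inter> \<gamma>3 = {} \<and> \<gamma>2 \<inter> \<gamma>3 = {} \<and> \<gamma>1 \<union> \<gamma>2 \<union> \<gamma>3 = \<gamma>}"

lemma finite_CP: "finite P \<Longrightarrow> finite (CP P)"
  unfolding CP_def IP_def
  by (rule finite_subset[where B = "Pow (Pow P)"]) auto

lemma finite_splits2: "finite P \<Longrightarrow> finite (splits2 P \<gamma>)"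
  unfolding splits2_def
  by (rule finite_subset[where B = "CP P \<times> CP P"]) (auto simp: finite_CP)

lemma CP_Un: "\<gamma>1 \<in> CP P \<Longrightarrow> \<gamma>2 \<in> CP P \<Longrightarrow> \<gamma>1 \<union> \<gamma>2 \<in> CP P"
  unfolding CP_def by auto

lemma bij_betw_splits2_left_splits3:
  "bij_betw (\<lambda>((\<gamma>12, \<gamma>3), (\<gamma>1, \<gamma>2)). (\<gamma>1, \<gamma>2, \<gamma>3))
     (SIGMA p:splits2 P \<gamma>. splits2 P (fst p)) (splits3 P \<gamma>)"
  by (rule bij_betw_byWitness[where f' = "\<lambda>(\<gamma>1, \<gamma>2, \<gamma>3). ((\<gamma>1 \<union> \<gamma>2, \<gamma>3), (\<gamma>1, \<gamma>2))"])
    (auto simp: splits2_def splits3_def CP_Un)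

lemma bij_betw_splits2_right_splits3:
  "bij_betw (\<lambda>((\<gamma>1, \<gamma>23), (\<gamma>2, \<gamma>3)). (\<gamma>1, \<gamma>2, \<gamma>3))
     (SIGMA p:splits2 P \<gamma>. splits2 P (snd p)) (splits3 P \<gamma>)"
  by (rule bij_betw_byWitness[where f' = "\<lambda>(\<gamma>1, \<gamma>2, \<gamma>3). ((\<gamma>1, \<gamma>2 \<union> \<gamma>3), (\<gamma>2, \<gamma>3))"])
    (auto simp: splits2_def splits3_def CP_Un)

locale weighted_pcl =
  fixes D :: "'d pvm"
  assumes pv_monoid: "pv_monoid D"
begin

sublocale plus: comm_monoid_set "pplus D" "pzero D"
  using pv_monoid unfolding pv_monoid_def
  by (intro comm_monoid_set.intro comm_monoid_pplus) simp

lemma bigplus_eq_F [simp]: "bigplus D g A = plus.F g A"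
  unfolding bigplus_def plus.eq_fold by (simp add: comp_def)

lemma ptimes_zero_left [simp]: "ptimes D (pzero D) d = pzero D"
  and ptimes_zero_right [simp]: "ptimes D d (pzero D) = pzero D"
  using pv_monoid unfolding pv_monoid_def by auto

lemma ptimes_F_left:
  assumes "left_distrib D"
  shows "ptimes D d (plus.F g A) = plus.F (\<lambda>x. ptimes D d (g x)) A"
proof (cases "finite A")
  case True
  then show ?thesis
    by (induction A rule: finite_induct) (use assms in \<open>auto simp: left_distrib_def\<close>)
qed simp

lemma ptimes_F_right:
  assumes "right_distrib D"
  shows "ptimes D (plus.F g A) d = plus.F (\<lambda>x. ptimes D (g x) d) A"
proof (cases "finite A")
  case True
  then show ?thesis
    by (induction A rule: finite_induct) (use assms in \<open>auto simp: right_distrib_def\<close>)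
qed simp

lemma wsem_Coal_zero_right: "wsem D P (W_Coal z (W_Const (pzero D))) \<gamma> = pzero D"
  by (simp add: case_prod_beta plus.neutral)

lemma wsem_Coal_zero_left: "wsem D P (W_Coal (W_Const (pzero D)) z) \<gamma> = pzero D"
  by (simp add: case_prod_beta plus.neutral)

lemma wsem_Coal_commute:
  assumes "comm_times D"
  shows "wsem D P (W_Coal z1 z2) \<gamma> = wsem D P (W_Coal z2 z1) \<gamma>"
  unfolding wsem.simps bigplus_eq_F
  by (rule plus.reindex_bij_witness[where i = "\<lambda>(a, b). (b, a)" and j = "\<lambda>(a, b). (b, a)"])
    (use assms in \<open>auto simp: splits2_def comm_times_def\<close>)

lemma wsem_Coal_Coal_left:
  assumes "right_distrib D" and "finite P"
  shows "wsem D P (W_Coal (W_Coal z1 z2) z3) \<gamma> =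
    plus.F (\<lambda>(\<gamma>1, \<gamma>2, \<gamma>3). ptimes D (ptimes D (wsem D P z1 \<gamma>1) (wsem D P z2 \<gamma>2)) (wsem D P z3 \<gamma>3))
      (splits3 P \<gamma>)"
    (is "_ = plus.F ?f _")
proof -
  have "wsem D P (W_Coal (W_Coal z1 z2) z3) \<gamma> =
      plus.F (\<lambda>p. plus.F (\<lambda>q. ?f (fst q, snd q, snd p)) (splits2 P (fst p))) (splits2 P \<gamma>)"
    by (auto simp: ptimes_F_right[OF assms(1)] case_prod_beta intro: plus.cong)
  also have "\<dots> = plus.F (\<lambda>(p, q). ?f (fst q, snd q, snd p)) (SIGMA p:splits2 P \<gamma>. splits2 P (fst p))"
    by (rule plus.Sigma) (auto simp: finite_splits2 assms(2))
  also have "\<dots> = plus.F ?f (splits3 P \<gamma>)"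
    using plus.reindex_bij_betw[OF bij_betw_splits2_left_splits3, of ?f]
    by (simp add: case_prod_beta')
  finally show ?thesis .
qed

lemma wsem_Coal_Coal_right:
  assumes "left_distrib D" and "finite P"
  shows "wsem D P (W_Coal z1 (W_Coal z2 z3)) \<gamma> =
    plus.F (\<lambda>(\<gamma>1, \<gamma>2, \<gamma>3). ptimes D (wsem D P z1 \<gamma>1) (ptimes D (wsem D P z2 \<gamma>2) (wsem D P z3 \<gamma>3)))
      (splits3 P \<gamma>)"
    (is "_ = plus.F ?f _")
proof -
  have "wsem D P (W_Coal z1 (W_Coal z2 z3)) \<gamma> =
      plus.F (\<lambda>p. plus.F (\<lambda>q. ?f (fst p, fst q, snd q)) (splits2 P (snd p))) (splits2 P \<gamma>)"
    by (auto simp: ptimes_F_left[OF assms(1)] case_prod_beta intro: plus.cong)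
  also have "\<dots> = plus.F (\<lambda>(p, q). ?f (fst p, fst q, snd q)) (SIGMA p:splits2 P \<gamma>. splits2 P (snd p))"
    by (rule plus.Sigma) (auto simp: finite_splits2 assms(2))
  also have "\<dots> = plus.F ?f (splits3 P \<gamma>)"
    using plus.reindex_bij_betw[OF bij_betw_splits2_right_splits3, of ?f]
    by (simp add: case_prod_beta')
  finally show ?thesis .
qed

lemma wsem_Coal_assoc:
  assumes "assoc_pvm D" and "plus_distrib D" and "finite P"
  shows "wsem D P (W_Coal (W_Coal z1 z2) z3) \<gamma> = wsem D P (W_Coal z1 (W_Coal z2 z3)) \<gamma>"
proof -
  have left: "left_distrib D" and right: "right_distrib D"
    using assms(2) by (simp_all add: plus_distrib_def)
  show ?thesis
    unfolding wsem_Coal_Coal_left[OF right assms(3)] wsem_Coal_Coal_right[OF left assms(3)]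
    using assms(1) by (simp add: assoc_pvm_def case_prod_beta)
qed

end

theorem mainTheorem3:
  fixes D :: "'d pvm" and P :: "'p set" and z z1 z2 z3 :: "('d, 'p) wpcl"
  assumes "pv_monoid D" and "idempotent_pvm D" and "symmetric_val D"
    and "finite P" and "P \<noteq> {}"
  shows "(wequiv D P (W_Coal z (W_Const (pzero D))) (W_Const (pzero D))
           \<and> wequiv D P (W_Const (pzero D)) (W_Coal (W_Const (pzero D)) z))
    \<and> (comm_times D \<longrightarrow> wequiv D P (W_Coal z1 z2) (W_Coal z2 z1))
    \<and> (assoc_pvm D \<and> plus_distrib D \<longrightarrow>
           wequiv D P (W_Coal (W_Coal z1 z2) z3) (W_Coal z1 (W_Coal z2 z3)))
    \<and> (left_distrib D \<longrightarrow>
           wequiv D P (W_Times z (W_Plus z1 z2)) (W_Plus (W_Times z z1) (W_Times z z2)))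
    \<and> (right_distrib D \<longrightarrow>
           wequiv D P (W_Times (W_Plus z1 z2) z) (W_Plus (W_Times z1 z) (W_Times z2 z)))"
proof -
  interpret weighted_pcl D by (rule weighted_pcl.intro) (rule assms(1))
  have "wequiv D P (W_Coal z (W_Const (pzero D))) (W_Const (pzero D))"
    and "wequiv D P (W_Const (pzero D)) (W_Coal (W_Const (pzero D)) z)"
    by (simp_all add: wequiv_def wsem_Coal_zero_left wsem_Coal_zero_right del: wsem.simps(5))
  moreover have "wequiv D P (W_Coal z1 z2) (W_Coal z2 z1)" if "comm_times D"
    unfolding wequiv_def using wsem_Coal_commute[OF that] by blast
  moreover have "wequiv D P (W_Coal (W_Coal z1 z2) z3) (W_Coal z1 (W_Coal z2 z3))"
    if "assoc_pvm D" and "plus_distrib D"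
    unfolding wequiv_def using wsem_Coal_assoc[OF that assms(4)] by blast
  moreover have "wequiv D P (W_Times z (W_Plus z1 z2)) (W_Plus (W_Times z z1) (W_Times z z2))"
    if "left_distrib D"
    using that by (simp add: wequiv_def left_distrib_def)
  moreover have "wequiv D P (W_Times (W_Plus z1 z2) z) (W_Plus (W_Times z1 z) (W_Times z2 z))"
    if "right_distrib D"
    using that by (simp add: wequiv_def right_distrib_def)
  ultimately show ?thesis by blast
qed

end
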